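(* Let $Y\subset\mathbb{R}^n$ be open, and let $\omega\colon Y\to\mathbb{R}^n$, $f\colon Y\to\mathbb{R}^n$, $F\colon Y\to\mathbb{R}$, $H\colon Y\to\mathbb{R}^{n\times m}$, $g\colon Y\to\mathbb{R}^m$, $f^{\mathrm{num}}\colon Y\times Y\to\mathbb{R}^n$, $H^{\mathrm{num}}\colon Y\times Y\to\mathbb{R}^{n\times m}$, $(Hg)^{\mathrm{num}}\colon Y\times Y\to\mathbb{R}^n$ be arbitrary with $f^{\mathrm{num}}(u,u)=f(u)$, $H^{\mathrm{num}}(u,u)=H(u)$, $(Hg)^{\mathrm{num}}(u,u)=H(u)g(u)$. Then the following are equivalent: (A) there exists $F^{\mathrm{num}}\colon Y\times Y\to\mathbb{R}$ with $F^{\mathrm{num}}(u,u)=F(u)$ such that for all $u_-,u_0,u_+\in Y$, $$\omega(u_0)\cdot\Big(f^{\mathrm{num}}(u_0,u_+)-f^{\mathrm{num}}(u_-,u_0)+(Hg)^{\mathrm{num}}(u_0,u_+)-(Hg)^{\mathrm{num}}(u_-,u_0)-H^{\mathrm{num}}(u_0,u_+)g(u_0)+H^{\mathrm{num}}(u_-,u_0)g(u_0)\Big)\ \ge\ F^{\mathrm{num}}(u_0,u_+)-F^{\mathrm{num}}(u_-,u_0);$$ (B) for all $u_-,u_+\in Y$, $$[\![\omega]\!]\cdot f^{\mathrm{num}}+[\![\omega]\!]\cdot (Hg)^{\mathrm{num}}-\omega(u_+)\cdot H^{\mathrm{num}}g(u_+)+\omega(u_-)\cdot H^{\mathrm{num}}g(u_-)\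 \le\ [\![\omega\cdot f-F]\!],$$ with all numerical fluxes evaluated at $(u_-,u_+)$. Moreover, there exists a consistent $F^{\mathrm{num}}$ with equality in (A) for all triples iff (B) holds with equality for all pairs, and then $$F^{\mathrm{num}}=\{\{F\}\}+\{\{\omega\}\}\cdot f^{\mathrm{num}}-\{\{\omega\cdot f\}\}+\{\{\omega\}\}\cdot(Hg)^{\mathrm{num}}-\tfrac12\omega(u_+)\cdot H^{\mathrm{num}}g(u_+)-\tfrac12\omega(u_-)\cdot H^{\mathrm{num}}g(u_-).$$
   Context: For a function $a$ on $Y$ and states $u_\pm$: $\{\{a\}\}=\tfrac12(a(u_-)+a(u_+))$, $[\![a]\!]=a(u_+)-a(u_-)$. *)

theory Defs
  imports "HOL-Analysis.Analysis"
begin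

definition avg :: "('a \<Rightarrow> 'b::real_vector) \<Rightarrow> 'a \<Rightarrow> 'a \<Rightarrow> 'b" where
  "avg a um up = (1/2) *\<^sub>R (a um + a up)"

definition jump :: "('a \<Rightarrow> 'b::real_vector) \<Rightarrow> 'a \<Rightarrow> 'a \<Rightarrow> 'b" where
  "jump a um up = a up - a um"

end

theory Submission
  imports Defs
begin

(* With P(s,a,b) = \<omega>(s) \<bullet> (f^num(a,b) + (Hg)^num(a,b) - H^num(a,b) g(s)), the cell expression in (A)
   is L(u0,u+) - R(u-,u0) for L(c,b) = P(c,c,b) and R(a,c) = P(c,a,c), and L, R agree on the
   diagonal.  Taking u0 = u- and u0 = u+ in (A) and adding, F^num cancels and (B) remains.
   Conversely F^num(a,b) = F(a) + L(a,b) - L(a,a) is consistent, and for it the slack in (A) at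
   (u-,u0,u+) is exactly the slack in (B) at (u-,u0).  In the equality case each of the two
   specialisations determines F^num, and their average is the stated formula. *)

lemma three_point_le_iff_two_point_le:
  fixes L R :: "'a \<Rightarrow> 'a \<Rightarrow> real" and F :: "'a \<Rightarrow> real"
  assumes diag: "\<And>u. u \<in> Y \<Longrightarrow> L u u = R u u"
  shows "(\<exists>Fnum. (\<forall>u\<in>Y. Fnum u u = F u) \<and>
            (\<forall>a\<in>Y. \<forall>c\<in>Y. \<forall>b\<in>Y. Fnum c b - Fnum a c \<le> L c b - R a c))
     \<longleftrightarrow> (\<forall>a\<in>Y. \<forall>b\<in>Y. R a b - L a b \<le> (L b b - F b) - (L a a - F a))"
proof
  assume "\<exists>Fnum. (\<forall>u\<in>Y. Fnum u u = F u) \<and>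
            (\<forall>a\<in>Y. \<forall>c\<in>Y. \<forall>b\<in>Y. Fnum c b - Fnum a c \<le> L c b - R a c)"
  then obtain Fnum where cons: "\<forall>u\<in>Y. Fnum u u = F u"
    and three: "\<forall>a\<in>Y. \<forall>c\<in>Y. \<forall>b\<in>Y. Fnum c b - Fnum a c \<le> L c b - R a c"
    by blast
  show "\<forall>a\<in>Y. \<forall>b\<in>Y. R a b - L a b \<le> (L b b - F b) - (L a a - F a)"
  proof (intro ballI)
    fix a b assume "a \<in> Y" "b \<in> Y"
    then have "Fnum a b - Fnum a a \<le> L a b - R a a" "Fnum b b - Fnum a b \<le> L b b - R a b"
      "Fnum a a = F a" "Fnum b b = F b" "L a a = R a a"
      using three cons diag by blast+
    then show "R a b - L a b \<le> (L b b - F b) - (L a a - F a)" by linarith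
  qed
next
  assume two: "\<forall>a\<in>Y. \<forall>b\<in>Y. R a b - L a b \<le> (L b b - F b) - (L a a - F a)"
  let ?Fnum = "\<lambda>a b. F a + L a b - L a a"
  have "?Fnum c b - ?Fnum a c \<le> L c b - R a c" if "a \<in> Y" "c \<in> Y" for a c b
    using two that by force
  then show "\<exists>Fnum. (\<forall>u\<in>Y. Fnum u u = F u) \<and>
            (\<forall>a\<in>Y. \<forall>c\<in>Y. \<forall>b\<in>Y. Fnum c b - Fnum a c \<le> L c b - R a c)"
    by (intro exI[of _ ?Fnum]) auto
qed

lemma three_point_eq_iff_two_point_eq:
  fixes L R :: "'a \<Rightarrow> 'a \<Rightarrow> real" and F :: "'a \<Rightarrow> real"
  assumes diag: "\<And>u. u \<in> Y \<Longrightarrow> L u u = R u u"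
  shows "(\<exists>Fnum. (\<forall>u\<in>Y. Fnum u u = F u) \<and>
            (\<forall>a\<in>Y. \<forall>c\<in>Y. \<forall>b\<in>Y. L c b - R a c = Fnum c b - Fnum a c))
     \<longleftrightarrow> (\<forall>a\<in>Y. \<forall>b\<in>Y. R a b - L a b = (L b b - F b) - (L a a - F a))"
proof
  assume "\<exists>Fnum. (\<forall>u\<in>Y. Fnum u u = F u) \<and>
            (\<forall>a\<in>Y. \<forall>c\<in>Y. \<forall>b\<in>Y. L c b - R a c = Fnum c b - Fnum a c)"
  then obtain Fnum where cons: "\<forall>u\<in>Y. Fnum u u = F u"
    and three: "\<forall>a\<in>Y. \<forall>c\<in>Y. \<forall>b\<in>Y. L c b - R a c = Fnum c b - Fnum a c"
    by blast
  show "\<forall>a\<in>Y. \<forall>b\<in>Y. R a b - L a b = (L b b - F b) - (L a a - F a)"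
  proof (intro ballI)
    fix a b assume "a \<in> Y" "b \<in> Y"
    then have "L a b - R a a = Fnum a b - Fnum a a" "L b b - R a b = Fnum b b - Fnum a b"
      "Fnum a a = F a" "Fnum b b = F b" "L a a = R a a"
      using three cons diag by blast+
    then show "R a b - L a b = (L b b - F b) - (L a a - F a)" by linarith
  qed
next
  assume two: "\<forall>a\<in>Y. \<forall>b\<in>Y. R a b - L a b = (L b b - F b) - (L a a - F a)"
  let ?Fnum = "\<lambda>a b. F a + L a b - L a a"
  have "L c b - R a c = ?Fnum c b - ?Fnum a c" if "a \<in> Y" "c \<in> Y" for a c b
    using two that by force
  then show "\<exists>Fnum. (\<forall>u\<in>Y. Fnum u u = F u) \<and>
            (\<forall>a\<in>Y. \<forall>c\<in>Y. \<forall>b\<in>Y. L c b - R a c = Fnum c b - Fnum a c)"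
    by (intro exI[of _ ?Fnum]) auto
qed

lemma three_point_eq_imp_flux_eq:
  fixes L R Fnum :: "'a \<Rightarrow> 'a \<Rightarrow> real" and F :: "'a \<Rightarrow> real"
  assumes diag: "\<And>u. u \<in> Y \<Longrightarrow> L u u = R u u"
    and cons: "\<forall>u\<in>Y. Fnum u u = F u"
    and three: "\<forall>a\<in>Y. \<forall>c\<in>Y. \<forall>b\<in>Y. L c b - R a c = Fnum c b - Fnum a c"
    and "a \<in> Y" "b \<in> Y"
  shows "Fnum a b = (F a + F b) / 2 + (L a b + R a b) / 2 - (L a a + L b b) / 2"
proof -
  have "Fnum a b = F a + L a b - L a a"
    using three cons diag \<open>a \<in> Y\<close> \<open>b \<in> Y\<close> by force
  moreover have "Fnum a b = F b - L b b + R a b"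
    using three cons \<open>a \<in> Y\<close> \<open>b \<in> Y\<close> by force
  ultimately show ?thesis by (simp add: field_simps)
qed

definition interface_term ::
    "('a \<Rightarrow> real^'n) \<Rightarrow> ('a \<Rightarrow> 'a \<Rightarrow> real^'n) \<Rightarrow> ('a \<Rightarrow> 'a \<Rightarrow> real^'m^'n)
      \<Rightarrow> ('a \<Rightarrow> 'a \<Rightarrow> real^'n) \<Rightarrow> ('a \<Rightarrow> real^'m) \<Rightarrow> 'a \<Rightarrow> 'a \<Rightarrow> 'a \<Rightarrow> real" where
  "interface_term \<omega> fnum Hnum Hgnum g s a b = \<omega> s \<bullet> (fnum a b + Hgnum a b - Hnum a b *v g s)"

lemma three_point_expression_eq_interface_terms:
  "\<omega> u0 \<bullet> (fnum u0 up - fnum um u0 + Hgnum u0 up - Hgnum um u0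
            - Hnum u0 up *v g u0 + Hnum um u0 *v g u0)
   = interface_term \<omega> fnum Hnum Hgnum g u0 u0 up - interface_term \<omega> fnum Hnum Hgnum g u0 um u0"
  by (simp add: interface_term_def inner_diff_right inner_add_right)

lemma two_point_expression_eq_interface_terms:
  "jump \<omega> um up \<bullet> fnum um up + jump \<omega> um up \<bullet> Hgnum um up
     - \<omega> up \<bullet> (Hnum um up *v g up) + \<omega> um \<bullet> (Hnum um up *v g um)
   = interface_term \<omega> fnum Hnum Hgnum g up um up - interface_term \<omega> fnum Hnum Hgnum g um um up"
  by (simp add: interface_term_def jump_def inner_diff_right inner_add_right inner_diff_left)

lemma interface_term_consistent:
  assumes "fnum u u = f u" "Hnum u u = H u" "Hgnum u u = H u *v g u"
  shows "interface_term \<omega> fnum Hnum Hgnum g u u u = \<omega> u \<bullet> f u"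
  using assms by (simp add: interface_term_def)

lemma interface_terms_average:
  "(interface_term \<omega> fnum Hnum Hgnum g um um up + interface_term \<omega> fnum Hnum Hgnum g up um up) / 2
   = avg \<omega> um up \<bullet> fnum um up + avg \<omega> um up \<bullet> Hgnum um up
     - (1/2) * (\<omega> up \<bullet> (Hnum um up *v g up)) - (1/2) * (\<omega> um \<bullet> (Hnum um up *v g um))"
  by (simp add: interface_term_def avg_def inner_diff_right inner_add_right inner_add_left
      field_simps)

theorem mainTheorem7:
  fixes Y :: "(real^'n) set"
    and \<omega> f :: "real^'n \<Rightarrow> real^'n"
    and F :: "real^'n \<Rightarrow> real"
    and H :: "real^'n \<Rightarrow> real^'m^'n"
    and g :: "real^'n \<Rightarrow> real^'m"
    and fnum :: "real^'n \<Rightarrow> real^'n \<Rightarrow> real^'n"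
    and Hnum :: "real^'n \<Rightarrow> real^'n \<Rightarrow> real^'m^'n"
    and Hgnum :: "real^'n \<Rightarrow> real^'n \<Rightarrow> real^'n"
  assumes "open Y"
    and fnum_cons: "\<And>u. u \<in> Y \<Longrightarrow> fnum u u = f u"
    and Hnum_cons: "\<And>u. u \<in> Y \<Longrightarrow> Hnum u u = H u"
    and Hgnum_cons: "\<And>u. u \<in> Y \<Longrightarrow> Hgnum u u = H u *v g u"
  shows
   "((\<exists>Fnum :: real^'n \<Rightarrow> real^'n \<Rightarrow> real.
        (\<forall>u\<in>Y. Fnum u u = F u) \<and>
        (\<forall>um\<in>Y. \<forall>u0\<in>Y. \<forall>up\<in>Y.
           \<omega> u0 \<bullet> (fnum u0 up - fnum um u0 + Hgnum u0 up - Hgnum um u0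
                     - Hnum u0 up *v g u0 + Hnum um u0 *v g u0)
           \<ge> Fnum u0 up - Fnum um u0))
     \<longleftrightarrow>
     (\<forall>um\<in>Y. \<forall>up\<in>Y.
        jump \<omega> um up \<bullet> fnum um up + jump \<omega> um up \<bullet> Hgnum um up
        - \<omega> up \<bullet> (Hnum um up *v g up) + \<omega> um \<bullet> (Hnum um up *v g um)
        \<le> jump (\<lambda>u. \<omega> u \<bullet> f u - F u) um up))
   \<and>
   ((\<exists>Fnum :: real^'n \<Rightarrow> real^'n \<Rightarrow> real.
        (\<forall>u\<in>Y. Fnum u u = F u) \<and>
        (\<forall>um\<in>Y. \<forall>u0\<in>Y. \<forall>up\<in>Y.
           \<omega> u0 \<bullet> (fnum u0 up - fnum um u0 + Hgnum u0 up - Hgnum um u0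
                     - Hnum u0 up *v g u0 + Hnum um u0 *v g u0)
           = Fnum u0 up - Fnum um u0))
     \<longleftrightarrow>
     (\<forall>um\<in>Y. \<forall>up\<in>Y.
        jump \<omega> um up \<bullet> fnum um up + jump \<omega> um up \<bullet> Hgnum um up
        - \<omega> up \<bullet> (Hnum um up *v g up) + \<omega> um \<bullet> (Hnum um up *v g um)
        = jump (\<lambda>u. \<omega> u \<bullet> f u - F u) um up))
   \<and>
   (\<forall>Fnum :: real^'n \<Rightarrow> real^'n \<Rightarrow> real.
        (\<forall>u\<in>Y. Fnum u u = F u) \<and>
        (\<forall>um\<in>Y. \<forall>u0\<in>Y. \<forall>up\<in>Y.
           \<omega> u0 \<bullet> (fnum u0 up - fnum um u0 + Hgnum u0 up - Hgnum um u0
                     - Hnum u0 up *v g u0 + Hnum um u0 *v g u0)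
           = Fnum u0 up - Fnum um u0)
        \<longrightarrow>
        (\<forall>um\<in>Y. \<forall>up\<in>Y.
           Fnum um up = avg F um up + avg \<omega> um up \<bullet> fnum um up
             - avg (\<lambda>u. \<omega> u \<bullet> f u) um up + avg \<omega> um up \<bullet> Hgnum um up
             - (1/2) * (\<omega> up \<bullet> (Hnum um up *v g up))
             - (1/2) * (\<omega> um \<bullet> (Hnum um up *v g um))))"
proof -
  let ?P = "interface_term \<omega> fnum Hnum Hgnum g"
  let ?L = "\<lambda>c b. ?P c c b" and ?R = "\<lambda>a c. ?P c a c"
  have diag: "\<omega> u \<bullet> f u = ?P u u u" if "u \<in> Y" for u
    using that fnum_cons Hnum_cons Hgnum_cons by (simp add: interface_term_consistent)
  have jump_eq: "jump (\<lambda>u. \<omega> u \<bullet> f u - F u) a b = (?L b b - F b) - (?L a a - F a)"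
    if "a \<in> Y" "b \<in> Y" for a b
    using that by (simp add: jump_def diag)
  have avg_eq: "avg F a b + avg \<omega> a b \<bullet> fnum a b - avg (\<lambda>u. \<omega> u \<bullet> f u) a b
      + avg \<omega> a b \<bullet> Hgnum a b - (1/2) * (\<omega> b \<bullet> (Hnum a b *v g b))
      - (1/2) * (\<omega> a \<bullet> (Hnum a b *v g a))
    = (F a + F b) / 2 + (?L a b + ?R a b) / 2 - (?L a a + ?L b b) / 2"
    if "a \<in> Y" "b \<in> Y" for a b
    using that interface_terms_average[of \<omega> fnum Hnum Hgnum g a b]
    by (simp add: avg_def diag field_simps)
  show ?thesis
    unfolding three_point_expression_eq_interface_terms two_point_expression_eq_interface_terms
    using three_point_le_iff_two_point_le[of Y ?L ?R F] three_point_eq_iff_two_point_eq[of Y ?L ?R F]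
      three_point_eq_imp_flux_eq[of Y ?L ?R] avg_eq
    by (simp add: jump_eq)
qed

end
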